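(* Let $\psi$ be an $\mathcal{L}_\nu$-formula that is positive in $X$. Then for every belief model $(\Omega,\dots)$ for a game $G$, the operator $E\mapsto[\![\psi]\!]_E$ on $\mathcal P(\Omega)$ is monotonic; consequently $[\![\nu X.\psi]\!]=\bigcup\{E\subseteq\Omega: E\subseteq[\![\psi]\!]_E\}$.
   Context: Game, restrictions, $\mathcal{L}_O$, optimality conditions: $G=(T_1,\dots,T_n,<_1,\dots,<_n)$, $\ge_i$ reflexive closure of $<_i$; an optimality condition for $i$ is a closed first-order formula over atoms $C(a)$, $a\ge^i_cb$, constant $o$, interpreted in $(G,G',s)$ by $C(x)$ iff $\alpha(x)_j\in G'_j\ \forall j$ and $x\ge^i_zy$ iff $(\alpha(x)_i,\alpha(z)_{-i})\ge_i(\alpha(y)_i,\alpha(z)_{-i})$ ($o\mapsto s$); positive if all $C(\cdot)$ occur under an even number of negations. Belief model $(\Omega,\bar s_1,\dots,\bar s_n,P_1,\dots,P_n)$, $\bar s_i:\Omega\to T_i$, $P_i:\Omega\to2^\Omega$, $(G_E)_i=\{\bar s_i(u):u\in E\}$. $\mathcal{L}_\nu$: $\psi::=\mathit{rat}_{\phi_i}\mid X\mid\psi\wedge\psi\mid\neg\psi\mid\Box_i\psi\mid O_{\phi_i}\psi\mid\nu X.\psi$ ($\nu$-free body). Semantics: $[\![\mathit{rat}_{\phi_i}]\!]_E=\{\omega:(G,G_{P_i(\omega)},\bar s(\omega))\models\phi_i\}$, $[\![X]\!]_E=E$, intersections/complements, $[\![\Box_i\psi]\!]_E=\{\omega:P_i(\omega)\subseteq[\![\psi]\!]_E\}$,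 $[\![O_{\phi_i}\psi]\!]_E=\{\omega:(G,G_{[\![\psi]\!]_E},\bar s(\omega))\models\phi_i\}$, $[\![\nu X.\psi]\!]_E$ = outcome of transfinite iteration from $\Omega$ of $F\mapsto[\![\psi]\!]_F\cap F$ (intersections at limits). $\psi$ is positive in $X$ if each occurrence of $X$ is under an even number of negations and inside $O_{\phi_i}$ only when $\phi_i$ is positive. *)

theory Defs
  imports Main
begin

text \<open>A game with players of a finite type 'p. All strategies live in one
  ambient type 's; player i's strategy set is strats G i. A strategy profile
  is a function 'p => 's. pref G i s t means s <_i t.\<close>

record ('p, 's) game =
  strats :: "'p \<Rightarrow> 's set"
  pref   :: "'p \<Rightarrow> ('p \<Rightarrow> 's) \<Rightarrow> ('p \<Rightarrow> 's) \<Rightarrow> bool"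

definition profiles :: "('p, 's) game \<Rightarrow> ('p \<Rightarrow> 's) set" where
  "profiles G = {s. \<forall>j. s j \<in> strats G j}"

definition pref_geq :: "('p, 's) game \<Rightarrow> 'p \<Rightarrow> ('p \<Rightarrow> 's) \<Rightarrow> ('p \<Rightarrow> 's) \<Rightarrow> bool" where
  "pref_geq G i s t \<longleftrightarrow> pref G i t s \<or> s = t"

datatype oterm = OVar nat | OConst

text \<open>OGeq i c a b is the atom a >=^i_c b.\<close>
datatype 'p oform =
    OC oterm
  | OGeq 'p oterm oterm oterm
  | ONot "'p oform"
  | OAnd "'p oform" "'p oform"
  | OEx nat "'p oform"

fun oterm_vars :: "oterm \<Rightarrow> nat set" where
  "oterm_vars (OVar x) = {x}"
| "oterm_vars OConst = {}"

fun ofree :: "'p oform \<Rightarrow> nat set" where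
  "ofree (OC a) = oterm_vars a"
| "ofree (OGeq i c a b) = oterm_vars c \<union> oterm_vars a \<union> oterm_vars b"
| "ofree (ONot f) = ofree f"
| "ofree (OAnd f g) = ofree f \<union> ofree g"
| "ofree (OEx x f) = ofree f - {x}"

fun oplayers :: "'p oform \<Rightarrow> 'p set" where
  "oplayers (OC a) = {}"
| "oplayers (OGeq i c a b) = {i}"
| "oplayers (ONot f) = oplayers f"
| "oplayers (OAnd f g) = oplayers f \<union> oplayers g"
| "oplayers (OEx x f) = oplayers f"

definition opt_cond :: "'p \<Rightarrow> 'p oform \<Rightarrow> bool" where
  "opt_cond i f \<longleftrightarrow> ofree f = {} \<and> oplayers f \<subseteq> {i}"

text \<open>Positivity: every C-atom occurs under an even number of negations.\<close>
fun opos :: "'p oform \<Rightarrow> bool" and oneg :: "'p oform \<Rightarrow> bool" where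
  "opos (OC a) = True"
| "oneg (OC a) = False"
| "opos (OGeq i c a b) = True"
| "oneg (OGeq i c a b) = True"
| "opos (ONot f) = oneg f"
| "oneg (ONot f) = opos f"
| "opos (OAnd f g) = (opos f \<and> opos g)"
| "oneg (OAnd f g) = (oneg f \<and> oneg g)"
| "opos (OEx x f) = opos f"
| "oneg (OEx x f) = oneg f"

fun oeval :: "(nat \<Rightarrow> ('p \<Rightarrow> 's)) \<Rightarrow> ('p \<Rightarrow> 's) \<Rightarrow> oterm \<Rightarrow> ('p \<Rightarrow> 's)" where
  "oeval \<alpha> s (OVar x) = \<alpha> x"
| "oeval \<alpha> s OConst = s"

fun osat :: "('p, 's) game \<Rightarrow> ('p \<Rightarrow> 's set) \<Rightarrow> ('p \<Rightarrow> 's)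
    \<Rightarrow> (nat \<Rightarrow> ('p \<Rightarrow> 's)) \<Rightarrow> 'p oform \<Rightarrow> bool" where
  "osat G G' s \<alpha> (OC a) = (\<forall>j. oeval \<alpha> s a j \<in> G' j)"
| "osat G G' s \<alpha> (OGeq i c a b) =
     pref_geq G i ((oeval \<alpha> s c)(i := oeval \<alpha> s a i)) ((oeval \<alpha> s c)(i := oeval \<alpha> s b i))"
| "osat G G' s \<alpha> (ONot f) = (\<not> osat G G' s \<alpha> f)"
| "osat G G' s \<alpha> (OAnd f g) = (osat G G' s \<alpha> f \<and> osat G G' s \<alpha> g)"
| "osat G G' s \<alpha> (OEx x f) = (\<exists>t \<in> profiles G. osat G G' s (\<alpha>(x := t)) f)"

text \<open>(G, G', s) |= phi for a closed formula phi (the assignment is irrelevant).\<close>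
definition omodels :: "('p, 's) game \<Rightarrow> ('p \<Rightarrow> 's set) \<Rightarrow> ('p \<Rightarrow> 's) \<Rightarrow> 'p oform \<Rightarrow> bool" where
  "omodels G G' s f \<longleftrightarrow> osat G G' s (\<lambda>_. s) f"

definition belief_model :: "('p, 's) game \<Rightarrow> 'w set \<Rightarrow> ('p \<Rightarrow> 'w \<Rightarrow> 's) \<Rightarrow> ('p \<Rightarrow> 'w \<Rightarrow> 'w set) \<Rightarrow> bool" where
  "belief_model G Om sb P \<longleftrightarrow>
     (\<forall>i. \<forall>\<omega>\<in>Om. sb i \<omega> \<in> strats G i) \<and> (\<forall>i. \<forall>\<omega>\<in>Om. P i \<omega> \<subseteq> Om)"

definition restr :: "('p \<Rightarrow> 'w \<Rightarrow> 's) \<Rightarrow> 'w set \<Rightarrow> ('p \<Rightarrow> 's set)" where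
  "restr sb E = (\<lambda>i. sb i ` E)"

definition sprof :: "('p \<Rightarrow> 'w \<Rightarrow> 's) \<Rightarrow> 'w \<Rightarrow> ('p \<Rightarrow> 's)" where
  "sprof sb \<omega> = (\<lambda>i. sb i \<omega>)"

datatype 'p lnu =
    Rat 'p "'p oform"
  | X
  | And "'p lnu" "'p lnu"
  | Not "'p lnu"
  | Box 'p "'p lnu"
  | Opt 'p "'p oform" "'p lnu"
  | Nu "'p lnu"

fun nu_free :: "'p lnu \<Rightarrow> bool" where
  "nu_free (Rat i f) = True"
| "nu_free X = True"
| "nu_free (And a b) = (nu_free a \<and> nu_free b)"
| "nu_free (Not a) = nu_free a"
| "nu_free (Box i a) = nu_free a"
| "nu_free (Opt i f a) = nu_free a"
| "nu_free (Nu a) = False"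

fun lnu_formula :: "'p lnu \<Rightarrow> bool" where
  "lnu_formula (Rat i f) = opt_cond i f"
| "lnu_formula X = True"
| "lnu_formula (And a b) = (lnu_formula a \<and> lnu_formula b)"
| "lnu_formula (Not a) = lnu_formula a"
| "lnu_formula (Box i a) = lnu_formula a"
| "lnu_formula (Opt i f a) = (opt_cond i f \<and> lnu_formula a)"
| "lnu_formula (Nu a) = (nu_free a \<and> lnu_formula a)"

text \<open>Free occurrence of X (occurrences inside nu X. _ are bound).\<close>
fun occX :: "'p lnu \<Rightarrow> bool" where
  "occX (Rat i f) = False"
| "occX X = True"
| "occX (And a b) = (occX a \<or> occX b)"
| "occX (Not a) = occX a"
| "occX (Box i a) = occX a"
| "occX (Opt i f a) = occX a"
| "occX (Nu a) = False"

text \<open>posX: every free occurrence of X is under an even number of negations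
  and lies inside O_phi only if phi is positive; negX: same with odd.\<close>
fun posX :: "'p lnu \<Rightarrow> bool" and negX :: "'p lnu \<Rightarrow> bool" where
  "posX (Rat i f) = True"
| "negX (Rat i f) = True"
| "posX X = True"
| "negX X = False"
| "posX (And a b) = (posX a \<and> posX b)"
| "negX (And a b) = (negX a \<and> negX b)"
| "posX (Not a) = negX a"
| "negX (Not a) = posX a"
| "posX (Box i a) = posX a"
| "negX (Box i a) = negX a"
| "posX (Opt i f a) = (posX a \<and> (occX a \<longrightarrow> opos f))"
| "negX (Opt i f a) = (negX a \<and> (occX a \<longrightarrow> opos f))"
| "posX (Nu a) = True"
| "negX (Nu a) = True"

text \<open>Transfinite iteration from Om of a map f, with intersections at limits.
  Its stages form the least family containing Om, closed under f and under
  intersections of nonempty subfamilies; for the deflationary maps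
  F |-> g F \<inter> F used below the outcome of the iteration is the least stage,
  i.e. the intersection of all stages.\<close>
inductive_set iter_stages :: "('w set \<Rightarrow> 'w set) \<Rightarrow> 'w set \<Rightarrow> 'w set set"
  for f :: "'w set \<Rightarrow> 'w set" and Om :: "'w set" where
  start: "Om \<in> iter_stages f Om"
| step: "F \<in> iter_stages f Om \<Longrightarrow> f F \<in> iter_stages f Om"
| limit: "S \<in> Pow (iter_stages f Om) \<Longrightarrow> S \<noteq> {} \<Longrightarrow> \<Inter>S \<in> iter_stages f Om"

definition iter_outcome :: "('w set \<Rightarrow> 'w set) \<Rightarrow> 'w set \<Rightarrow> 'w set" where
  "iter_outcome f Om = \<Inter>(iter_stages f Om)"

fun sem :: "('p, 's) game \<Rightarrow> 'w set \<Rightarrow> ('p \<Rightarrow> 'w \<Rightarrow> 's) \<Rightarrow> ('p \<Rightarrow> 'w \<Rightarrow> 'w set)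
    \<Rightarrow> 'w set \<Rightarrow> 'p lnu \<Rightarrow> 'w set" where
  "sem G Om sb P E (Rat i f) = {\<omega>\<in>Om. omodels G (restr sb (P i \<omega>)) (sprof sb \<omega>) f}"
| "sem G Om sb P E X = E"
| "sem G Om sb P E (And a b) = sem G Om sb P E a \<inter> sem G Om sb P E b"
| "sem G Om sb P E (Not a) = Om - sem G Om sb P E a"
| "sem G Om sb P E (Box i a) = {\<omega>\<in>Om. P i \<omega> \<subseteq> sem G Om sb P E a}"
| "sem G Om sb P E (Opt i f a) = {\<omega>\<in>Om. omodels G (restr sb (sem G Om sb P E a)) (sprof sb \<omega>) f}"
| "sem G Om sb P E (Nu a) = iter_outcome (\<lambda>F. sem G Om sb P F a \<inter> F) Om"

end

theory Submission
  imports Defs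
begin

text \<open>Monotonicity of E \<mapsto> [[psi]]_E is proved by a simultaneous
  structural induction over psi: a formula positive in X is monotone in E and a
  formula negative in X is antitone. Negation swaps the two cases, Box and And
  preserve them, and for O_phi psi the restriction G_E grows with E, so a
  positive optimality condition phi (whose C-atoms are under an even number of
  negations, again an induction, now over L_O) can only become true. Where X does
  not occur, the semantics does not depend on E at all.

  The characterisation of nu X. psi is then a general fact about the transfinite
  iteration of F \<mapsto> g F \<inter> F from Om for a monotone g: its outcome is the union
  Z of all post-fixed points E \<subseteq> g E inside Om. Z lies below every stage (it is
  a post-fixed point, so it survives each step, and trivially each intersection),
  while the outcome is itself a stage, hence mapped to a stage containing it,
  hence a post-fixed point, hence contained in Z.\<close>

lemma osat_mono_restriction:
  assumes "\<And>j. G1 j \<subseteq> G2 j"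
  shows "(opos f \<longrightarrow> osat G G1 s \<alpha> f \<longrightarrow> osat G G2 s \<alpha> f) \<and>
         (oneg f \<longrightarrow> osat G G2 s \<alpha> f \<longrightarrow> osat G G1 s \<alpha> f)"
  using assms by (induction f arbitrary: \<alpha>) auto

lemma omodels_mono_restriction:
  assumes "opos f" and "\<And>j. G1 j \<subseteq> G2 j" and "omodels G G1 s f"
  shows "omodels G G2 s f"
  using assms osat_mono_restriction[of G1 G2 f G s] unfolding omodels_def by blast

lemma restr_mono: "E \<subseteq> E' \<Longrightarrow> restr sb E j \<subseteq> restr sb E' j"
  unfolding restr_def by (rule image_mono)

lemma sem_indep_of_X:
  "\<not> occX a \<Longrightarrow> sem G Om sb P E a = sem G Om sb P E' a"
  by (induction a) auto

lemma sem_Opt_mono: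
  assumes grow: "sem G Om sb P E a \<subseteq> sem G Om sb P E' a"
    and cond: "occX a \<longrightarrow> opos f"
  shows "sem G Om sb P E (Opt i f a) \<subseteq> sem G Om sb P E' (Opt i f a)"
proof (cases "occX a")
  case True
  then have "opos f" using cond by simp
  then show ?thesis
    using omodels_mono_restriction[OF _ restr_mono[OF grow]] by auto
next
  case False
  then show ?thesis using sem_indep_of_X[OF False, of G Om sb P E E'] by simp
qed

lemma sem_mono:
  assumes "E \<subseteq> E'"
  shows "(posX a \<longrightarrow> sem G Om sb P E a \<subseteq> sem G Om sb P E' a) \<and>
         (negX a \<longrightarrow> sem G Om sb P E' a \<subseteq> sem G Om sb P E a)"
proof (induction a)
  case (Opt i f a)
  then show ?case using sem_Opt_mono[of G Om sb P] by auto
qed (use assms in auto)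

lemma postfixpoint_below_stages:
  assumes "mono g" and "E \<subseteq> Om" and "E \<subseteq> g E"
    and "F \<in> iter_stages (\<lambda>F. g F \<inter> F) Om"
  shows "E \<subseteq> F"
  using assms(4)
proof (induction rule: iter_stages.induct)
  case start
  then show ?case using assms(2) .
next
  case (step F)
  then show ?case using assms(3) monoD[OF assms(1), of E F] by auto
qed auto

lemma iter_outcome_stage: "iter_outcome f Om \<in> iter_stages f Om"
  unfolding iter_outcome_def
  by (rule iter_stages.limit) (auto intro: iter_stages.start)

lemma iter_outcome_greatest_postfixpoint:
  assumes "mono g"
  shows "iter_outcome (\<lambda>F. g F \<inter> F) Om = \<Union>{E. E \<subseteq> Om \<and> E \<subseteq> g E}"
    (is "?O = ?Z")
proof
  have "g ?O \<inter> ?O \<in> iter_stages (\<lambda>F. g F \<inter> F) Om"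
    using iter_outcome_stage by (rule iter_stages.step)
  then have post: "?O \<subseteq> g ?O"
    unfolding iter_outcome_def by auto
  have "?O \<subseteq> Om"
    unfolding iter_outcome_def using iter_stages.start by auto
  then show "?O \<subseteq> ?Z" using post by auto
next
  show "?Z \<subseteq> ?O"
    unfolding iter_outcome_def
    using postfixpoint_below_stages[OF assms] by blast
qed

theorem mainTheorem8:
  fixes G :: "('p::finite, 's) game"
    and Om :: "'w set"
    and sb :: "'p \<Rightarrow> 'w \<Rightarrow> 's"
    and P :: "'p \<Rightarrow> 'w \<Rightarrow> 'w set"
    and psi :: "'p lnu"
  assumes "lnu_formula psi"
    and "posX psi"
    and "belief_model G Om sb P"
  shows "mono_on (Pow Om) (\<lambda>E. sem G Om sb P E psi)
    \<and> (lnu_formula (Nu psi) \<longrightarrow>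
        (\<forall>E'\<subseteq>Om. sem G Om sb P E' (Nu psi) = \<Union>{E. E \<subseteq> Om \<and> E \<subseteq> sem G Om sb P E psi}))"
proof -
  have mono: "mono (\<lambda>E. sem G Om sb P E psi)"
    using sem_mono[of _ _ psi G Om sb P] \<open>posX psi\<close> by (intro monoI) simp
  then have "mono_on (Pow Om) (\<lambda>E. sem G Om sb P E psi)"
    by (simp add: mono_on_def monoD)
  moreover have "sem G Om sb P E' (Nu psi) = \<Union>{E. E \<subseteq> Om \<and> E \<subseteq> sem G Om sb P E psi}"
    for E'
    using iter_outcome_greatest_postfixpoint[OF mono] by simp
  ultimately show ?thesis by blast
qed

end
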